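(* Let $\mathcal F|\mathcal G$ be a biflag with biflats indexed $F_1|G_1,\dots,F_k|G_k$ so that $F_1\subseteq\cdots\subseteq F_k$, $G_1\supseteq\cdots\supseteq G_k$, with $G_{k+1}=\emptyset$, and let $l$ be the largest index with $F_l\neq E$ ($l=0$ and $F_0=\emptyset$, $G_0=E$ if there is none). If $c\in E$ and $c\notin F_l$, then in $A_{M,M^\perp}$ \[ x_{\mathcal F|\mathcal G}\,\gamma_c=\sum_{F|G}x_{\mathcal F|\mathcal G\,\cup\,\{F|G\}}, \] the sum over biflats $F|G$ with $F_l\cup\{c\}\subseteq F\subsetneq E$ and $G_l\supseteq G\supseteq G_{l+1}$ (terms for which $\mathcal F|\mathcal G\cup\{F|G\}$ is not a biflag being zero).
   Context: Let $M$ be a matroid with no loops and no coloops on the ground set $E=\{0,1,\dots,n\}$; $M^\perp$ its dual. A biflat of $M$ is a pair $F|G$ where $F$ is a flat of $M$, $G$ is a flat of $M^\perp$, both are nonempty, they are not both equal to $E$, and $F\cup G=E$. Two biflats $F|G$, $F'|G'$ are compatible if ($F\subseteq F'$ and $G\supseteq G'$) or ($F\supseteq F'$ and $G\subseteq G'$). A biflag is a set of pairwise compatible biflats with $\bigcup_{F|G}(F\cap G)\neq E$. Conormal Chow ring: $S$ is the polynomial ring over $\mathbb R$ in variables $x_{F|G}$, one per biflat; $x_{\mathcal F|\mathcal G}=\prod_{F|G\in\mathcal F|\mathcal G}x_{F|G}$ for a set of biflats. For $i\in E$, $\gamma_i=\sum_{i\in F,\,F\neq E}x_{F|G}$, $\bar\gamma_i=\sum_{i\in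 G,\,G\neq E}x_{F|G}$. $I$ is generated by the $x_{\mathcal F|\mathcal G}$ for sets of biflats that are not biflags, $J$ by all $\gamma_i-\gamma_j$, $\bar\gamma_i-\bar\gamma_j$; $A_{M,M^\perp}=S/(I+J)$. *)

theory Defs
  imports Complex_Main "HOL-Library.Poly_Mapping"
begin

definition matroid_bases :: "'a set \<Rightarrow> 'a set set \<Rightarrow> bool" where
  "matroid_bases E \<B> \<longleftrightarrow> finite E \<and> \<B> \<noteq> {} \<and> (\<forall>B\<in>\<B>. B \<subseteq> E) \<and>
     (\<forall>B1\<in>\<B>. \<forall>B2\<in>\<B>. \<forall>x\<in>B1 - B2. \<exists>y\<in>B2 - B1. insert y (B1 - {x}) \<in> \<B>)"

definition dual_bases :: "'a set \<Rightarrow> 'a set set \<Rightarrow> 'a set set" where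
  "dual_bases E \<B> = (\<lambda>B. E - B) ` \<B>"

definition mrank :: "'a set set \<Rightarrow> 'a set \<Rightarrow> nat" where
  "mrank \<B> X = Max ((\<lambda>B. card (X \<inter> B)) ` \<B>)"

definition is_flat :: "'a set \<Rightarrow> 'a set set \<Rightarrow> 'a set \<Rightarrow> bool" where
  "is_flat E \<B> X \<longleftrightarrow> X \<subseteq> E \<and> (\<forall>e\<in>E - X. mrank \<B> (insert e X) > mrank \<B> X)"

definition is_loop :: "'a set set \<Rightarrow> 'a \<Rightarrow> bool" where
  "is_loop \<B> e \<longleftrightarrow> (\<forall>B\<in>\<B>. e \<notin> B)"

definition is_coloop :: "'a set set \<Rightarrow> 'a \<Rightarrow> bool" where
  "is_coloop \<B> e \<longleftrightarrow> (\<forall>B\<in>\<B>. e \<in> B)"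

text \<open>A biflat F|G is represented as the pair (F, G).\<close>

definition is_biflat :: "'a set \<Rightarrow> 'a set set \<Rightarrow> 'a set \<times> 'a set \<Rightarrow> bool" where
  "is_biflat E \<B> p \<longleftrightarrow> is_flat E \<B> (fst p) \<and> is_flat E (dual_bases E \<B>) (snd p) \<and>
     fst p \<noteq> {} \<and> snd p \<noteq> {} \<and> \<not> (fst p = E \<and> snd p = E) \<and> fst p \<union> snd p = E"

definition biflats :: "'a set \<Rightarrow> 'a set set \<Rightarrow> ('a set \<times> 'a set) set" where
  "biflats E \<B> = {p. is_biflat E \<B> p}"

definition compatible :: "'a set \<times> 'a set \<Rightarrow> 'a set \<times> 'a set \<Rightarrow> bool" where
  "compatible p q \<longleftrightarrow> (fst p \<subseteq> fst q \<and> snd p \<supseteq> snd q) \<or> (fst p \<supseteq> fst q \<and> snd p \<subseteq> snd q)"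

definition is_biflag :: "'a set \<Rightarrow> 'a set set \<Rightarrow> ('a set \<times> 'a set) set \<Rightarrow> bool" where
  "is_biflag E \<B> S \<longleftrightarrow> S \<subseteq> biflats E \<B> \<and> (\<forall>p\<in>S. \<forall>q\<in>S. compatible p q) \<and>
     (\<Union>p\<in>S. fst p \<inter> snd p) \<noteq> E"

text \<open>Polynomials over the reals in variables indexed by biflats:
  coefficient functions on monomials (exponent vectors).\<close>

type_synonym 'a cpoly = "(('a set \<times> 'a set) \<Rightarrow>\<^sub>0 nat) \<Rightarrow>\<^sub>0 real"

definition var :: "'a set \<times> 'a set \<Rightarrow> 'a cpoly" where
  "var p = Poly_Mapping.single (Poly_Mapping.single p 1) 1"

definition xprod :: "('a set \<times> 'a set) set \<Rightarrow> 'a cpoly" where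
  "xprod S = (\<Prod>p\<in>S. var p)"

definition gamma :: "'a set \<Rightarrow> 'a set set \<Rightarrow> 'a \<Rightarrow> 'a cpoly" where
  "gamma E \<B> i = (\<Sum>p\<in>{p\<in>biflats E \<B>. i \<in> fst p \<and> fst p \<noteq> E}. var p)"

definition gamma_bar :: "'a set \<Rightarrow> 'a set set \<Rightarrow> 'a \<Rightarrow> 'a cpoly" where
  "gamma_bar E \<B> i = (\<Sum>p\<in>{p\<in>biflats E \<B>. i \<in> snd p \<and> snd p \<noteq> E}. var p)"

definition ideal_gen :: "'r::comm_ring_1 set \<Rightarrow> 'r set" where
  "ideal_gen X = {f. \<exists>T c. finite T \<and> T \<subseteq> X \<and> f = (\<Sum>t\<in>T. c t * t)}"

definition gens_I :: "'a set \<Rightarrow> 'a set set \<Rightarrow> 'a cpoly set" where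
  "gens_I E \<B> = {xprod S | S. S \<subseteq> biflats E \<B> \<and> \<not> is_biflag E \<B> S}"

definition gens_J :: "'a set \<Rightarrow> 'a set set \<Rightarrow> 'a cpoly set" where
  "gens_J E \<B> = {gamma E \<B> i - gamma E \<B> j | i j. i \<in> E \<and> j \<in> E}
              \<union> {gamma_bar E \<B> i - gamma_bar E \<B> j | i j. i \<in> E \<and> j \<in> E}"

definition IJ :: "'a set \<Rightarrow> 'a set set \<Rightarrow> 'a cpoly set" where
  "IJ E \<B> = ideal_gen (gens_I E \<B> \<union> gens_J E \<B>)"

text \<open>Equality in the conormal Chow ring A = S/(I+J).\<close>

definition eq_in_A :: "'a set \<Rightarrow> 'a set set \<Rightarrow> 'a cpoly \<Rightarrow> 'a cpoly \<Rightarrow> bool" where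
  "eq_in_A E \<B> f g \<longleftrightarrow> f - g \<in> IJ E \<B>"

end

theory Submission
  imports Defs
begin

text \<open>Distributing \<open>x\<^sub>\<F>\<^sub>|\<^sub>\<G>\<close> over \<open>\<gamma>\<^sub>c\<close> gives the sum of \<open>x\<^sub>\<F>\<^sub>|\<^sub>\<G>\<^sub>\<union>\<^sub>{\<^sub>F\<^sub>|\<^sub>G\<^sub>}\<close> over the biflats
  with \<open>c \<in> F \<noteq> E\<close>, none of which already lies in the biflag, as \<open>c \<notin> F\<^sub>l\<close> and \<open>F\<^sub>i = E\<close>
  for \<open>i > l\<close>. Modulo \<open>I\<close> only the terms where \<open>\<F>|\<G> \<union> {F|G}\<close> is a biflag survive, and for
  those compatibility with \<open>F\<^sub>l|G\<^sub>l\<close> (where \<open>c \<in> F - F\<^sub>l\<close> excludes \<open>F \<subseteq> F\<^sub>l\<close>) and with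
  \<open>F\<^sub>l\<^sub>+\<^sub>1|G\<^sub>l\<^sub>+\<^sub>1 = E|G\<^sub>l\<^sub>+\<^sub>1\<close> (where \<open>F \<noteq> E\<close> excludes \<open>E \<subseteq> F\<close>) puts \<open>F|G\<close> in the range of the
  stated sum.\<close>

lemma sum_mem_ideal_gen:
  fixes g :: "'b \<Rightarrow> 'r::comm_ring_1"
  assumes "finite P" "g ` P \<subseteq> X"
  shows "(\<Sum>p\<in>P. g p) \<in> ideal_gen X"
proof -
  define m :: "'r \<Rightarrow> 'r" where "m t = of_nat (card {x\<in>P. g x = t})" for t
  have "(\<Sum>p\<in>P. g p) = (\<Sum>t\<in>g ` P. \<Sum>p\<in>{x\<in>P. g x = t}. g p)"
    by (rule sum.image_gen[OF assms(1)])
  also have "\<dots> = (\<Sum>t\<in>g ` P. m t * t)"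
    unfolding m_def by (intro sum.cong refl) simp
  finally show ?thesis
    unfolding ideal_gen_def using assms by (intro CollectI exI[of _ "g ` P"] exI[of _ m]) simp
qed

lemma eq_in_A_sum_subset:
  assumes "finite P" "Q \<subseteq> P" "f ` (P - Q) \<subseteq> gens_I E \<B>"
  shows "eq_in_A E \<B> (\<Sum>p\<in>P. f p) (\<Sum>p\<in>Q. f p)"
proof -
  have "(\<Sum>p\<in>P. f p) - (\<Sum>p\<in>Q. f p) = (\<Sum>p\<in>P - Q. f p)"
    by (rule sum_diff[OF assms(1,2), symmetric])
  moreover have "f ` (P - Q) \<subseteq> gens_I E \<B> \<union> gens_J E \<B>"
    using assms(3) by blast
  then have "(\<Sum>p\<in>P - Q. f p) \<in> IJ E \<B>"
    unfolding IJ_def by (rule sum_mem_ideal_gen[OF finite_Diff[OF assms(1)]])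
  ultimately show ?thesis
    by (simp add: eq_in_A_def)
qed

lemma biflats_subset_Pow: "biflats E \<B> \<subseteq> Pow E \<times> Pow E"
  by (auto simp: biflats_def is_biflat_def)

lemma finite_biflats: "finite E \<Longrightarrow> finite (biflats E \<B>)"
  using finite_subset[OF biflats_subset_Pow] by blast

lemma xprod_insert: "finite S \<Longrightarrow> p \<notin> S \<Longrightarrow> xprod (insert p S) = xprod S * var p"
  by (simp add: xprod_def mult.commute)

lemma xprod_mult_gamma:
  assumes "finite S" "\<And>p. p \<in> biflats E \<B> \<Longrightarrow> c \<in> fst p \<Longrightarrow> fst p \<noteq> E \<Longrightarrow> p \<notin> S"
  shows "xprod S * gamma E \<B> c
           = (\<Sum>p\<in>{p\<in>biflats E \<B>. c \<in> fst p \<and> fst p \<noteq> E}. xprod (insert p S))"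
  unfolding gamma_def sum_distrib_left using assms by (intro sum.cong refl) (simp add: xprod_insert)

lemma xprod_insert_mem_gens_I:
  "S \<subseteq> biflats E \<B> \<Longrightarrow> p \<in> biflats E \<B> \<Longrightarrow> \<not> is_biflag E \<B> (insert p S)
     \<Longrightarrow> xprod (insert p S) \<in> gens_I E \<B>"
  unfolding gens_I_def by blast

lemma compatible_sym: "compatible p q \<longleftrightarrow> compatible q p"
  unfolding compatible_def by blast

lemma compatible_not_subset:
  "compatible p q \<Longrightarrow> \<not> fst p \<subseteq> fst q \<Longrightarrow> fst q \<subseteq> fst p \<and> snd p \<subseteq> snd q"
  unfolding compatible_def by blast

lemma indexed_flag_not_mem:
  fixes k l :: nat
  assumes F_mono: "\<forall>i j. 1 \<le> i \<and> i \<le> j \<and> j \<le> k \<longrightarrow> Fs i \<subseteq> Fs j"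
    and l_le: "l \<le> k" and above_l: "\<forall>i. l < i \<and> i \<le> k \<longrightarrow> Fs i = E"
    and c: "c \<notin> Fs l" and p: "c \<in> fst p" "fst p \<noteq> E"
  shows "p \<notin> (\<lambda>i. (Fs i, Gs i)) ` {1..k}"
proof
  assume "p \<in> (\<lambda>i. (Fs i, Gs i)) ` {1..k}"
  then obtain i where i: "1 \<le> i" "i \<le> k" "p = (Fs i, Gs i)"
    by auto
  show False
  proof (cases "l < i")
    case True
    then show False using above_l i p by simp
  next
    case False
    then have "Fs i \<subseteq> Fs l"
      using F_mono i(1) l_le by (simp add: not_less)
    then show False using c p(1) i by auto
  qed
qed

lemma biflag_insert_between:
  fixes k l :: nat
  assumes flag: "is_biflag E \<B> (insert p ((\<lambda>i. (Fs i, Gs i)) ` {1..k}))"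
    and p: "p \<in> biflats E \<B>" "c \<in> fst p" "fst p \<noteq> E"
    and F0: "Fs 0 = {}" and G0: "Gs 0 = E" and Gk1: "Gs (Suc k) = {}"
    and l_le: "l \<le> k" and above_l: "\<forall>i. l < i \<and> i \<le> k \<longrightarrow> Fs i = E"
    and c: "c \<notin> Fs l"
  shows "Fs l \<subseteq> fst p \<and> snd p \<subseteq> Gs l \<and> Gs (Suc l) \<subseteq> snd p"
proof -
  have comp: "compatible p (Fs i, Gs i)" if "1 \<le> i" "i \<le> k" for i
    using flag that by (simp add: is_biflag_def)
  have p_sub: "fst p \<subseteq> E" "snd p \<subseteq> E"
    using subsetD[OF biflats_subset_Pow p(1)] by (simp_all add: mem_Times_iff)
  have lower: "Fs l \<subseteq> fst p \<and> snd p \<subseteq> Gs l"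
  proof (cases "l = 0")
    case True
    then show ?thesis using p_sub by (simp add: F0 G0)
  next
    case False
    then have "compatible p (Fs l, Gs l)"
      using l_le by (simp add: comp)
    moreover have "\<not> fst p \<subseteq> Fs l"
      using p(2) c by blast
    ultimately show ?thesis
      using compatible_not_subset[of p "(Fs l, Gs l)"] by simp
  qed
  have upper: "Gs (Suc l) \<subseteq> snd p"
  proof (cases "l = k")
    case True
    then show ?thesis by (simp add: Gk1)
  next
    case False
    then have "compatible (Fs (Suc l), Gs (Suc l)) p"
      using l_le comp[of "Suc l"] compatible_sym[of p] by simp
    moreover have "\<not> Fs (Suc l) \<subseteq> fst p"
      using False l_le above_l p_sub p(3) by auto
    ultimately show ?thesis
      using compatible_not_subset[of "(Fs (Suc l), Gs (Suc l))" p] by simp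
  qed
  show ?thesis
    using lower upper by blast
qed

theorem mainTheorem9:
  fixes n k l :: nat and \<B> :: "nat set set" and Fs Gs :: "nat \<Rightarrow> nat set"
    and FG :: "(nat set \<times> nat set) set" and c :: nat
  defines "E \<equiv> {0..n}"
  assumes M: "matroid_bases E \<B>"
    and no_loops: "\<forall>e\<in>E. \<not> is_loop \<B> e"
    and no_coloops: "\<forall>e\<in>E. \<not> is_coloop \<B> e"
    and biflag: "is_biflag E \<B> FG"
    and FG_idx: "FG = (\<lambda>i. (Fs i, Gs i)) ` {1..k}"
    and inj: "inj_on (\<lambda>i. (Fs i, Gs i)) {1..k}"
    and F_mono: "\<forall>i j. 1 \<le> i \<and> i \<le> j \<and> j \<le> k \<longrightarrow> Fs i \<subseteq> Fs j"
    and G_anti: "\<forall>i j. 1 \<le> i \<and> i \<le> j \<and> j \<le> k \<longrightarrow> Gs j \<subseteq> Gs i"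
    and F0: "Fs 0 = {}" and G0: "Gs 0 = E" and Gk1: "Gs (Suc k) = {}"
    and l_le: "l \<le> k"
    and l_largest: "(l = 0 \<or> Fs l \<noteq> E) \<and> (\<forall>i. l < i \<and> i \<le> k \<longrightarrow> Fs i = E)"
    and c: "c \<in> E" "c \<notin> Fs l"
  shows "eq_in_A E \<B> (xprod FG * gamma E \<B> c)
           (\<Sum>p\<in>{p\<in>biflats E \<B>. insert c (Fs l) \<subseteq> fst p \<and> fst p \<noteq> E
                                  \<and> Gs (Suc l) \<subseteq> snd p \<and> snd p \<subseteq> Gs l}.
              xprod (insert p FG))"
proof -
  define P where "P = {p\<in>biflats E \<B>. c \<in> fst p \<and> fst p \<noteq> E}"
  define Q where "Q = {p\<in>biflats E \<B>. insert c (Fs l) \<subseteq> fst p \<and> fst p \<noteq> E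
                                  \<and> Gs (Suc l) \<subseteq> snd p \<and> snd p \<subseteq> Gs l}"
  have "xprod FG * gamma E \<B> c = (\<Sum>p\<in>P. xprod (insert p FG))"
    unfolding P_def FG_idx
    using indexed_flag_not_mem[OF F_mono l_le conjunct2[OF l_largest] c(2)]
    by (intro xprod_mult_gamma) simp_all
  moreover have "eq_in_A E \<B> (\<Sum>p\<in>P. xprod (insert p FG)) (\<Sum>p\<in>Q. xprod (insert p FG))"
  proof (rule eq_in_A_sum_subset)
    show "finite P"
      unfolding P_def E_def using finite_biflats[of "{0..n}"] by simp
    show "Q \<subseteq> P"
      unfolding P_def Q_def by blast
    show "(\<lambda>p. xprod (insert p FG)) ` (P - Q) \<subseteq> gens_I E \<B>"
    proof (rule image_subsetI)
      fix p assume "p \<in> P - Q"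
      then have p: "p \<in> biflats E \<B>" "c \<in> fst p" "fst p \<noteq> E" "p \<notin> Q"
        by (simp_all add: P_def)
      have "\<not> is_biflag E \<B> (insert p FG)"
        using p biflag_insert_between[OF _ p(1-3) F0 G0 Gk1 l_le conjunct2[OF l_largest] c(2)]
        by (auto simp: FG_idx Q_def)
      moreover have "FG \<subseteq> biflats E \<B>"
        using biflag by (simp add: is_biflag_def)
      ultimately show "xprod (insert p FG) \<in> gens_I E \<B>"
        using p(1) by (intro xprod_insert_mem_gens_I)
    qed
  qed
  ultimately show ?thesis
    unfolding Q_def by simp
qed

end
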